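(* If $\theta_0,\theta_1\in V_\Lambda\setminus\mathcal W(\mathcal G)$ lie in different path components of $V_\Lambda\setminus\mathcal W(\mathcal G)$, then $\mathcal P(\theta_0)\ne\mathcal P(\theta_1)$.
   Context: Let $\Lambda$ be a finite dimensional algebra over a field with $n$ isoclasses of simple modules, and $\mathrm{mod}\text-\Lambda$ the category of finitely generated right $\Lambda$-modules. Fix a torsion class $\mathcal G\subseteq\mathrm{mod}\text-\Lambda$ (closed under isomorphisms, extensions and quotients). For $B\in\mathcal G$, a subobject of $B$ is a submodule in $\mathcal G$; a subobject $A\subseteq B$ is strict if $A\cap B'\in\mathcal G$ for every subobject $B'$ of $B$; a strict quotient of $B$ is $B/A$ with $A$ a strict subobject. Let $V_\Lambda=\mathrm{Hom}_{\mathbb Z}(K_0\Lambda,\mathbb R)\cong\mathbb R^n$ (with its Euclidean topology); $\theta(M)$ denotes $\theta$ applied to the dimension vector of $M$. For $M\in\mathcal G$, the pseudo-wall $D_{\mathcal G}(M)$ is the set of $\theta\in V_\Lambda$ with $\theta(M)=0$ and $\theta(M')\le0$ for every strict subobject $M'$ of $M$. $\mathcal W(\theta)$ is the class of $X\in\mathcal G$ with $\theta\in D_{\mathcal G}(X)$, and $\mathcal W(\mathcal G)$ is the set of $\theta$ with $\mathcal W(\theta)\ne\{0\}$, equivalently the union of the $D_{\mathcal G}(M)$ over nonzero $M\in\mathcal G$. $\mathcal P(\theta)$ is the class consisting of $0$ and all nonzero $M\in\mathcal G$ such that $\theta(M'')>0$ for every nonzero strict quotient $M''$ of $M$ (including $M''=M$).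 *)

theory Defs
  imports "Jordan_Normal_Form.Matrix"
begin

text \<open>
  The finite dimensional algebra Lambda over the field 'k is given by a k-basis
  e_0,...,e_(m-1) with structure constants c: e_i e_j = sum_l c i j l e_l,
  and unit 1 = sum_i u i e_i.
  A finitely generated right Lambda-module is a finite dimensional k-vector space
  k^d together with matrices act i (acting on column vectors) describing
  v |-> v . e_i.  Modules are compared up to isomorphism (all classes below are
  closed under isomorphism).
\<close>

type_synonym 'k rmod = "nat \<times> (nat \<Rightarrow> 'k mat)"

definition mdim :: "'k rmod \<Rightarrow> nat" where "mdim M = fst M"
definition act :: "'k rmod \<Rightarrow> nat \<Rightarrow> 'k mat" where "act M = snd M"

definition fd_algebra :: "nat \<Rightarrow> (nat \<Rightarrow> nat \<Rightarrow> nat \<Rightarrow> 'k::field) \<Rightarrow> (nat \<Rightarrow> 'k) \<Rightarrow> bool" where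
  "fd_algebra m c u \<longleftrightarrow>
     (\<forall>i<m. \<forall>j<m. \<forall>k<m. \<forall>p<m.
        (\<Sum>l<m. c i j l * c l k p) = (\<Sum>l<m. c j k l * c i l p)) \<and>
     (\<forall>j<m. \<forall>p<m. (\<Sum>i<m. u i * c i j p) = (if j = p then 1 else 0)
                 \<and> (\<Sum>i<m. u i * c j i p) = (if j = p then 1 else 0))"

definition is_rmod :: "nat \<Rightarrow> (nat \<Rightarrow> nat \<Rightarrow> nat \<Rightarrow> 'k::field) \<Rightarrow> (nat \<Rightarrow> 'k) \<Rightarrow> 'k rmod \<Rightarrow> bool" where
  "is_rmod m c u M \<longleftrightarrow>
     (\<forall>i<m. act M i \<in> carrier_mat (mdim M) (mdim M)) \<and>
     (\<forall>i<m. \<forall>j<m. \<forall>r<mdim M. \<forall>s<mdim M.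
        (act M j * act M i) $$ (r, s) = (\<Sum>l<m. c i j l * act M l $$ (r, s))) \<and>
     (\<forall>r<mdim M. \<forall>s<mdim M. (\<Sum>i<m. u i * act M i $$ (r, s)) = (if r = s then 1 else 0))"

definition mhom :: "nat \<Rightarrow> 'k rmod \<Rightarrow> 'k rmod \<Rightarrow> 'k::field mat \<Rightarrow> bool" where
  "mhom m M N f \<longleftrightarrow> f \<in> carrier_mat (mdim N) (mdim M) \<and> (\<forall>i<m. f * act M i = act N i * f)"

definition mker :: "'k rmod \<Rightarrow> 'k rmod \<Rightarrow> 'k::field mat \<Rightarrow> 'k vec set" where
  "mker M N f = {v \<in> carrier_vec (mdim M). f *\<^sub>v v = 0\<^sub>v (mdim N)}"

definition mimg :: "'k rmod \<Rightarrow> 'k::field mat \<Rightarrow> 'k vec set" where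
  "mimg M f = (\<lambda>v. f *\<^sub>v v) ` carrier_vec (mdim M)"

definition mono_hom :: "nat \<Rightarrow> 'k rmod \<Rightarrow> 'k rmod \<Rightarrow> 'k::field mat \<Rightarrow> bool" where
  "mono_hom m M N f \<longleftrightarrow> mhom m M N f \<and> mker M N f = {0\<^sub>v (mdim M)}"

definition epi_hom :: "nat \<Rightarrow> 'k rmod \<Rightarrow> 'k rmod \<Rightarrow> 'k::field mat \<Rightarrow> bool" where
  "epi_hom m M N f \<longleftrightarrow> mhom m M N f \<and> mimg M f = carrier_vec (mdim N)"

definition iso_hom :: "nat \<Rightarrow> 'k rmod \<Rightarrow> 'k rmod \<Rightarrow> 'k::field mat \<Rightarrow> bool" where
  "iso_hom m M N f \<longleftrightarrow> mono_hom m M N f \<and> epi_hom m M N f"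

definition ses :: "nat \<Rightarrow> (nat \<Rightarrow> nat \<Rightarrow> nat \<Rightarrow> 'k::field) \<Rightarrow> (nat \<Rightarrow> 'k) \<Rightarrow>
    'k rmod \<Rightarrow> 'k rmod \<Rightarrow> 'k rmod \<Rightarrow> 'k mat \<Rightarrow> 'k mat \<Rightarrow> bool" where
  "ses m c u L M N f g \<longleftrightarrow> is_rmod m c u L \<and> is_rmod m c u M \<and> is_rmod m c u N \<and>
     mono_hom m L M f \<and> epi_hom m M N g \<and> mimg L f = mker M N g"

definition submod :: "nat \<Rightarrow> 'k rmod \<Rightarrow> 'k::field vec set \<Rightarrow> bool" where
  "submod m M U \<longleftrightarrow> U \<subseteq> carrier_vec (mdim M) \<and> 0\<^sub>v (mdim M) \<in> U \<and>
     (\<forall>v\<in>U. \<forall>w\<in>U. v + w \<in> U) \<and> (\<forall>a. \<forall>v\<in>U. a \<cdot>\<^sub>v v \<in> U) \<and>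
     (\<forall>i<m. \<forall>v\<in>U. act M i *\<^sub>v v \<in> U)"

definition is_sub_iso :: "nat \<Rightarrow> (nat \<Rightarrow> nat \<Rightarrow> nat \<Rightarrow> 'k::field) \<Rightarrow> (nat \<Rightarrow> 'k) \<Rightarrow>
    'k rmod \<Rightarrow> 'k vec set \<Rightarrow> 'k rmod \<Rightarrow> bool" where
  "is_sub_iso m c u M U N \<longleftrightarrow> is_rmod m c u N \<and> (\<exists>f. mono_hom m N M f \<and> mimg N f = U)"

definition is_quot_iso :: "nat \<Rightarrow> (nat \<Rightarrow> nat \<Rightarrow> nat \<Rightarrow> 'k::field) \<Rightarrow> (nat \<Rightarrow> 'k) \<Rightarrow>
    'k rmod \<Rightarrow> 'k vec set \<Rightarrow> 'k rmod \<Rightarrow> bool" where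
  "is_quot_iso m c u M U N \<longleftrightarrow> is_rmod m c u N \<and> (\<exists>g. epi_hom m M N g \<and> mker M N g = U)"

definition torsion_class :: "nat \<Rightarrow> (nat \<Rightarrow> nat \<Rightarrow> nat \<Rightarrow> 'k::field) \<Rightarrow> (nat \<Rightarrow> 'k) \<Rightarrow>
    'k rmod set \<Rightarrow> bool" where
  "torsion_class m c u G \<longleftrightarrow>
     (\<forall>M\<in>G. is_rmod m c u M) \<and>
     (\<forall>M N f. M \<in> G \<and> is_rmod m c u N \<and> iso_hom m M N f \<longrightarrow> N \<in> G) \<and>
     (\<forall>L M N f g. ses m c u L M N f g \<and> L \<in> G \<and> N \<in> G \<longrightarrow> M \<in> G) \<and>
     (\<forall>M N g. M \<in> G \<and> is_rmod m c u N \<and> epi_hom m M N g \<longrightarrow> N \<in> G)"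

definition sub_in :: "nat \<Rightarrow> (nat \<Rightarrow> nat \<Rightarrow> nat \<Rightarrow> 'k::field) \<Rightarrow> (nat \<Rightarrow> 'k) \<Rightarrow>
    'k rmod set \<Rightarrow> 'k rmod \<Rightarrow> 'k vec set \<Rightarrow> bool" where
  "sub_in m c u G M U \<longleftrightarrow> (\<exists>N\<in>G. is_sub_iso m c u M U N)"

definition subobj :: "nat \<Rightarrow> (nat \<Rightarrow> nat \<Rightarrow> nat \<Rightarrow> 'k::field) \<Rightarrow> (nat \<Rightarrow> 'k) \<Rightarrow>
    'k rmod set \<Rightarrow> 'k rmod \<Rightarrow> 'k vec set \<Rightarrow> bool" where
  "subobj m c u G B A \<longleftrightarrow> submod m B A \<and> sub_in m c u G B A"

definition strict_subobj :: "nat \<Rightarrow> (nat \<Rightarrow> nat \<Rightarrow> nat \<Rightarrow> 'k::field) \<Rightarrow> (nat \<Rightarrow> 'k) \<Rightarrow>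
    'k rmod set \<Rightarrow> 'k rmod \<Rightarrow> 'k vec set \<Rightarrow> bool" where
  "strict_subobj m c u G B A \<longleftrightarrow> subobj m c u G B A \<and>
     (\<forall>B'. subobj m c u G B B' \<longrightarrow> sub_in m c u G B (A \<inter> B'))"

text \<open>V_Lambda = Hom_Z(K_0 Lambda, R): real functions on modules that are additive on
  short exact sequences (universal property of the Grothendieck group).\<close>
definition VLam :: "nat \<Rightarrow> (nat \<Rightarrow> nat \<Rightarrow> nat \<Rightarrow> 'k::field) \<Rightarrow> (nat \<Rightarrow> 'k) \<Rightarrow>
    ('k rmod \<Rightarrow> real) set" where
  "VLam m c u = {\<theta>. \<forall>L M N f g. ses m c u L M N f g \<longrightarrow> \<theta> M = \<theta> L + \<theta> N}"

definition pwall :: "nat \<Rightarrow> (nat \<Rightarrow> nat \<Rightarrow> nat \<Rightarrow> 'k::field) \<Rightarrow> (nat \<Rightarrow> 'k) \<Rightarrow>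
    'k rmod set \<Rightarrow> 'k rmod \<Rightarrow> ('k rmod \<Rightarrow> real) set" where
  "pwall m c u G M = {\<theta> \<in> VLam m c u. \<theta> M = 0 \<and>
     (\<forall>A N. strict_subobj m c u G M A \<and> is_sub_iso m c u M A N \<longrightarrow> \<theta> N \<le> 0)}"

definition WG :: "nat \<Rightarrow> (nat \<Rightarrow> nat \<Rightarrow> nat \<Rightarrow> 'k::field) \<Rightarrow> (nat \<Rightarrow> 'k) \<Rightarrow>
    'k rmod set \<Rightarrow> ('k rmod \<Rightarrow> real) set" where
  "WG m c u G = (\<Union>M\<in>{M\<in>G. mdim M \<noteq> 0}. pwall m c u G M)"

definition Pcl :: "nat \<Rightarrow> (nat \<Rightarrow> nat \<Rightarrow> nat \<Rightarrow> 'k::field) \<Rightarrow> (nat \<Rightarrow> 'k) \<Rightarrow>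
    'k rmod set \<Rightarrow> ('k rmod \<Rightarrow> real) \<Rightarrow> 'k rmod set" where
  "Pcl m c u G \<theta> = {M \<in> G. mdim M = 0 \<or>
     (\<forall>A N. strict_subobj m c u G M A \<and> is_quot_iso m c u M A N \<and> mdim N \<noteq> 0 \<longrightarrow> \<theta> N > 0)}"

text \<open>Via evaluation at
  the simple modules V_Lambda is identified with R^n; since every theta(M) is a fixed
  integer combination of the theta(S_i), the Euclidean topology is the initial topology
  of the evaluation maps theta \<mapsto> theta(M).\<close>
definition joinable_in :: "nat \<Rightarrow> (nat \<Rightarrow> nat \<Rightarrow> nat \<Rightarrow> 'k::field) \<Rightarrow> (nat \<Rightarrow> 'k) \<Rightarrow>
    ('k rmod \<Rightarrow> real) set \<Rightarrow> ('k rmod \<Rightarrow> real) \<Rightarrow> ('k rmod \<Rightarrow> real) \<Rightarrow> bool" where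
  "joinable_in m c u S \<theta>0 \<theta>1 \<longleftrightarrow>
     (\<exists>\<gamma> :: real \<Rightarrow> 'k rmod \<Rightarrow> real.
        \<gamma> 0 = \<theta>0 \<and> \<gamma> 1 = \<theta>1 \<and> (\<forall>t\<in>{0..1}. \<gamma> t \<in> S) \<and>
        (\<forall>M. is_rmod m c u M \<longrightarrow> continuous_on {0..1} (\<lambda>t. \<gamma> t M)))"

end

theory Submission
  imports Defs "Jordan_Normal_Form.Determinant"
begin

(* If P(theta0) = P(theta1), the straight segment from theta0 to theta1 avoids W(G).
   The key fact is that for theta off the walls, a nonzero X in G none of whose nonzero
   strict subobjects lies in P(theta) has theta(X) < 0.  By induction on the dimension,
   theta is then negative on all proper nonzero strict subobjects of X; so theta(X) = 0
   would put theta on the pseudo-wall D(X), and theta(X) > 0 would put X into P(theta),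
   because every strict quotient X/A has theta(X/A) = theta(X) - theta(A) >= theta(X).
   Now if a point (1-t) theta0 + t theta1 of the segment lay on D(X), X nonzero, then
   either some nonzero strict subobject N of X lies in P(theta0) = P(theta1), so the
   point is positive on N, or theta0(X) and theta1(X) are negative, so the point is
   negative on X; both contradict the definition of D(X). *)

lemma carrier_vec_0: "carrier_vec 0 = {0\<^sub>v 0}"
  by auto

lemma mult_mat_vec_zero: "A \<in> carrier_mat nr nc \<Longrightarrow> A *\<^sub>v 0\<^sub>v nc = (0\<^sub>v nr :: 'a::comm_ring vec)"
  by (intro eq_vecI) auto

lemma vec_eq_if_minus_eq_zero:
  fixes v w :: "'a::ab_group_add vec"
  assumes "v \<in> carrier_vec n" "w \<in> carrier_vec n" "v - w = 0\<^sub>v n"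
  shows "v = w"
proof (rule eq_vecI)
  fix i assume i: "i < dim_vec w"
  have "v $ i - w $ i = (v - w) $ i" using assms(1,2) i by simp
  also have "\<dots> = 0" using assms i by simp
  finally show "v $ i = w $ i" by simp
qed (use assms in simp)

lemma col_eq_mult_unit_vec:
  fixes A :: "'a::comm_ring_1 mat"
  assumes A: "A \<in> carrier_mat nr nc" and j: "j < nc"
  shows "col A j = A *\<^sub>v unit_vec nc j"
proof -
  have "col A j = col (A * 1\<^sub>m nc) j" using A by simp
  also have "\<dots> = A *\<^sub>v col (1\<^sub>m nc) j" by (rule col_mult2[OF A one_carrier_mat j])
  finally show ?thesis using j by simp
qed

lemma mat_factor_through:
  fixes f p :: "'a::comm_ring_1 mat"
  assumes f: "f \<in> carrier_mat nr n" and p: "p \<in> carrier_mat nr k"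
    and cols: "\<And>j. j < k \<Longrightarrow> \<exists>w \<in> carrier_vec n. f *\<^sub>v w = col p j"
  obtains q where "q \<in> carrier_mat n k" "f * q = p"
proof -
  obtain w where w: "\<And>j. j < k \<Longrightarrow> w j \<in> carrier_vec n \<and> f *\<^sub>v w j = col p j"
    using cols by metis
  define q where "q = mat n k (\<lambda>(i, j). w j $ i)"
  have q: "q \<in> carrier_mat n k" by (simp add: q_def)
  have "col (f * q) j = col p j" if j: "j < k" for j
  proof -
    have "col q j = w j" using w[OF j] j by (intro eq_vecI) (auto simp: q_def)
    then show ?thesis using col_mult2[OF f q j] w[OF j] by simp
  qed
  then have "f * q = p"
    using f p q by (intro mat_col_eqI) auto
  with q show thesis by (rule that)
qed

lemma square_mat_surj_if_inj:
  fixes A :: "'a::field mat"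
  assumes A: "A \<in> carrier_mat n n"
    and inj: "\<And>v. v \<in> carrier_vec n \<Longrightarrow> A *\<^sub>v v = 0\<^sub>v n \<Longrightarrow> v = 0\<^sub>v n"
  shows "(\<lambda>v. A *\<^sub>v v) ` carrier_vec n = carrier_vec n"
proof -
  have "det A \<noteq> 0" using det_0_iff_vec_prod_zero_field[OF A] inj by blast
  from det_non_zero_imp_unit[OF A this, of "()"]
  obtain B where B: "B \<in> carrier_mat n n" "A * B = 1\<^sub>m n"
    unfolding Units_def ring_mat_def by auto
  have "y = A *\<^sub>v (B *\<^sub>v y)" if "y \<in> carrier_vec n" for y
    using A B that by (metis assoc_mult_mat_vec one_mult_mat_vec)
  then show ?thesis using A B by force
qed

lemma wide_mat_kernel_nonzero:
  fixes A :: "'a::field mat"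
  assumes A: "A \<in> carrier_mat n k" and lt: "n < k"
  obtains v where "v \<in> carrier_vec k" "v \<noteq> 0\<^sub>v k" "A *\<^sub>v v = 0\<^sub>v n"
proof -
  \<comment> \<open>pad A with zero rows to a singular square matrix\<close>
  define F where "F = mat k k (\<lambda>(i, j). if i < n then A $$ (i, j) else 0)"
  have F: "F \<in> carrier_mat k k" by (simp add: F_def)
  have "F = mat\<^sub>r k k (\<lambda>i. if i = k - 1 then 0\<^sub>v k else row F i)"
    using lt by (intro eq_matI) (auto simp: F_def)
  also have "det \<dots> = 0"
    using lt F by (intro det_row_0) auto
  finally obtain v where v: "v \<in> carrier_vec k" "v \<noteq> 0\<^sub>v k" "F *\<^sub>v v = 0\<^sub>v k"
    using det_0_iff_vec_prod_zero_field[OF F] by blast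
  have "A *\<^sub>v v = 0\<^sub>v n"
  proof (rule eq_vecI)
    fix i assume "i < dim_vec (0\<^sub>v n :: 'a vec)"
    then have i: "i < n" by simp
    have "row A i = row F i" using i lt A by (intro eq_vecI) (auto simp: F_def)
    then have "(A *\<^sub>v v) $ i = (F *\<^sub>v v) $ i" using A F i lt by simp
    then show "(A *\<^sub>v v) $ i = 0\<^sub>v n $ i" using v(3) i lt by simp
  qed (use A in simp)
  with v show thesis by (intro that)
qed

lemma carrier_mat_dim_zero_eq:
  "A \<in> carrier_mat nr nc \<Longrightarrow> B \<in> carrier_mat nr nc \<Longrightarrow> nr = 0 \<or> nc = 0 \<Longrightarrow> A = B"
  by (intro eq_matI) auto

lemma is_rmod_act: "is_rmod m c u M \<Longrightarrow> i < m \<Longrightarrow> act M i \<in> carrier_mat (mdim M) (mdim M)"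
  by (simp add: is_rmod_def)

lemma mhom_carrier: "mhom m M N f \<Longrightarrow> f \<in> carrier_mat (mdim N) (mdim M)"
  by (simp add: mhom_def)

lemma mono_hom_carrier: "mono_hom m M N f \<Longrightarrow> f \<in> carrier_mat (mdim N) (mdim M)"
  by (simp add: mono_hom_def mhom_def)

lemma mhom_if_dim_zero:
  assumes M: "is_rmod m c u M" and N: "is_rmod m c u N"
    and f: "f \<in> carrier_mat (mdim N) (mdim M)" and zero: "mdim M = 0 \<or> mdim N = 0"
  shows "mhom m M N f"
  unfolding mhom_def
proof (intro conjI allI impI f)
  fix i assume i: "i < m"
  have "f * act M i \<in> carrier_mat (mdim N) (mdim M)" "act N i * f \<in> carrier_mat (mdim N) (mdim M)"
    using f is_rmod_act[OF M i] is_rmod_act[OF N i] by auto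
  then show "f * act M i = act N i * f" by (rule carrier_mat_dim_zero_eq) (use zero in auto)
qed

lemma mhom_one:
  assumes M: "is_rmod m c u M"
  shows "mhom m M M (1\<^sub>m (mdim M))"
  unfolding mhom_def
proof (intro conjI allI impI)
  fix i assume "i < m"
  then have "act M i \<in> carrier_mat (mdim M) (mdim M)" by (rule is_rmod_act[OF M])
  then show "1\<^sub>m (mdim M) * act M i = act M i * 1\<^sub>m (mdim M)" by simp
qed simp

lemma mker_one: "mker M M (1\<^sub>m (mdim M)) = {0\<^sub>v (mdim M)}"
  by (auto simp: mker_def)

lemma mono_hom_one: "is_rmod m c u M \<Longrightarrow> mono_hom m M M (1\<^sub>m (mdim M))"
  by (simp add: mono_hom_def mhom_one mker_one)

lemma mimg_one:
  fixes M :: "'k::field rmod"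
  shows "mimg M (1\<^sub>m (mdim M)) = carrier_vec (mdim M)"
proof -
  have "(\<lambda>v. (1\<^sub>m (mdim M) :: 'k mat) *\<^sub>v v) ` carrier_vec (mdim M) = (\<lambda>v. v) ` carrier_vec (mdim M)"
    by (rule image_cong) auto
  then show ?thesis by (simp add: mimg_def)
qed

lemma mono_hom_eq_zero:
  "mono_hom m M N f \<Longrightarrow> v \<in> carrier_vec (mdim M) \<Longrightarrow> f *\<^sub>v v = 0\<^sub>v (mdim N) \<Longrightarrow> v = 0\<^sub>v (mdim M)"
  unfolding mono_hom_def mker_def by auto

lemma mono_hom_inj:
  assumes f: "mono_hom m M N f" and v: "v \<in> carrier_vec (mdim M)" and w: "w \<in> carrier_vec (mdim M)"
    and eq: "f *\<^sub>v v = f *\<^sub>v w"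
  shows "v = w"
proof -
  have fc: "f \<in> carrier_mat (mdim N) (mdim M)" using f by (rule mono_hom_carrier)
  have "f *\<^sub>v (v - w) = 0\<^sub>v (mdim N)"
    using fc v w eq by (simp add: mult_minus_distrib_mat_vec)
  then have "v - w = 0\<^sub>v (mdim M)" by (rule mono_hom_eq_zero[OF f, rotated]) (use v w in simp)
  then show ?thesis by (rule vec_eq_if_minus_eq_zero[OF v w])
qed

lemma mono_hom_cancel_left:
  assumes f: "mono_hom m M N f" and A: "A \<in> carrier_mat (mdim M) k" and B: "B \<in> carrier_mat (mdim M) k"
    and eq: "f * A = f * B"
  shows "A = B"
proof (rule mat_col_eqI)
  have fc: "f \<in> carrier_mat (mdim N) (mdim M)" using f by (rule mono_hom_carrier)
  fix j assume "j < dim_col B"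
  then have j: "j < k" using B by simp
  have "f *\<^sub>v col A j = f *\<^sub>v col B j"
    using eq col_mult2[OF fc A j] col_mult2[OF fc B j] by simp
  then show "col A j = col B j" by (rule mono_hom_inj[OF f, rotated 2]) (use A B j in auto)
qed (use A B in auto)

lemma mhom_mult:
  assumes L: "is_rmod m c u L" and M: "is_rmod m c u M" and N: "is_rmod m c u N"
    and f: "mhom m M N f" and g: "mhom m L M g"
  shows "mhom m L N (f * g)"
  unfolding mhom_def
proof (intro conjI allI impI)
  have fc: "f \<in> carrier_mat (mdim N) (mdim M)" using f by (rule mhom_carrier)
  have gc: "g \<in> carrier_mat (mdim M) (mdim L)" using g by (rule mhom_carrier)
  show "f * g \<in> carrier_mat (mdim N) (mdim L)" using fc gc by simp
  fix i assume i: "i < m"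
  note acts = is_rmod_act[OF L i] is_rmod_act[OF M i] is_rmod_act[OF N i]
  have "(f * g) * act L i = f * (g * act L i)" by (rule assoc_mult_mat[OF fc gc acts(1)])
  also have "\<dots> = f * (act M i * g)" using g i by (simp add: mhom_def)
  also have "\<dots> = (f * act M i) * g" by (rule assoc_mult_mat[OF fc acts(2) gc, symmetric])
  also have "\<dots> = (act N i * f) * g" using f i by (simp add: mhom_def)
  also have "\<dots> = act N i * (f * g)" by (rule assoc_mult_mat[OF acts(3) fc gc])
  finally show "(f * g) * act L i = act N i * (f * g)" .
qed

lemma mono_hom_mult:
  assumes L: "is_rmod m c u L" and M: "is_rmod m c u M" and N: "is_rmod m c u N"
    and f: "mono_hom m M N f" and g: "mono_hom m L M g"
  shows "mono_hom m L N (f * g)"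
proof -
  have fc: "f \<in> carrier_mat (mdim N) (mdim M)" using f by (rule mono_hom_carrier)
  have gc: "g \<in> carrier_mat (mdim M) (mdim L)" using g by (rule mono_hom_carrier)
  have "mhom m L N (f * g)" using mhom_mult[OF L M N] f g by (simp add: mono_hom_def)
  moreover have "v = 0\<^sub>v (mdim L)" if "v \<in> mker L N (f * g)" for v
  proof -
    have v: "v \<in> carrier_vec (mdim L)" and "(f * g) *\<^sub>v v = 0\<^sub>v (mdim N)"
      using that by (auto simp: mker_def)
    then have "f *\<^sub>v (g *\<^sub>v v) = 0\<^sub>v (mdim N)" using fc gc by simp
    then have "g *\<^sub>v v = 0\<^sub>v (mdim M)" by (rule mono_hom_eq_zero[OF f, rotated]) (use gc v in simp)
    then show ?thesis by (rule mono_hom_eq_zero[OF g v])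
  qed
  moreover have "0\<^sub>v (mdim L) \<in> mker L N (f * g)"
    using fc gc by (simp add: mker_def mult_mat_vec_zero)
  ultimately show ?thesis unfolding mono_hom_def by blast
qed

lemma mimg_mult:
  assumes "f \<in> carrier_mat (mdim N) (mdim M)" "g \<in> carrier_mat (mdim M) (mdim L)"
  shows "mimg L (f * g) = (\<lambda>v. f *\<^sub>v v) ` mimg L g"
  unfolding mimg_def image_image by (rule image_cong[OF refl]) (use assms in simp)

lemma mhom_factor_through_mono:
  assumes L: "is_rmod m c u L" and M: "is_rmod m c u M" and N: "is_rmod m c u N"
    and f: "mono_hom m M N f" and p: "mhom m L N p" and sub: "mimg L p \<subseteq> mimg M f"
  obtains q where "mhom m L M q" "f * q = p"
proof -
  have fc: "f \<in> carrier_mat (mdim N) (mdim M)" using f by (rule mono_hom_carrier)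
  have pc: "p \<in> carrier_mat (mdim N) (mdim L)" using p by (rule mhom_carrier)
  have "\<exists>w \<in> carrier_vec (mdim M). f *\<^sub>v w = col p j" if j: "j < mdim L" for j
  proof -
    have "col p j \<in> mimg L p"
      unfolding mimg_def col_eq_mult_unit_vec[OF pc j] by (rule imageI) simp
    with sub have "col p j \<in> mimg M f" by (rule subsetD)
    then show ?thesis unfolding mimg_def by (metis imageE)
  qed
  then obtain q where q: "q \<in> carrier_mat (mdim M) (mdim L)" and fq: "f * q = p"
    by (rule mat_factor_through[OF fc pc])
  have "mhom m L M q"
    unfolding mhom_def
  proof (intro conjI allI impI q)
    fix i assume i: "i < m"
    note acts = is_rmod_act[OF L i] is_rmod_act[OF M i] is_rmod_act[OF N i]
    have "f * (q * act L i) = p * act L i" using assoc_mult_mat[OF fc q acts(1)] fq by simp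
    also have "\<dots> = act N i * (f * q)" using p i fq by (simp add: mhom_def)
    also have "\<dots> = (f * act M i) * q"
      using f i assoc_mult_mat[OF acts(3) fc q] by (simp add: mono_hom_def mhom_def)
    also have "\<dots> = f * (act M i * q)" by (rule assoc_mult_mat[OF fc acts(2) q])
    finally have "f * (q * act L i) = f * (act M i * q)" .
    then show "q * act L i = act M i * q"
      by (rule mono_hom_cancel_left[OF f, rotated 2]) (use q acts in auto)
  qed
  then show thesis using fq by (rule that)
qed

lemma mimg_factor_through_mono:
  assumes f: "mono_hom m M N f" and q: "q \<in> carrier_mat (mdim M) (mdim L)" and fq: "f * q = p"
  shows "mimg L q = {w \<in> carrier_vec (mdim M). f *\<^sub>v w \<in> mimg L p}"
proof (intro equalityI subsetI)
  have fc: "f \<in> carrier_mat (mdim N) (mdim M)" using f by (rule mono_hom_carrier)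
  have pv: "p *\<^sub>v v = f *\<^sub>v (q *\<^sub>v v)" if "v \<in> carrier_vec (mdim L)" for v
    using fq fc q that by auto
  fix w
  show "w \<in> {w \<in> carrier_vec (mdim M). f *\<^sub>v w \<in> mimg L p}" if "w \<in> mimg L q"
    using that q pv by (auto simp: mimg_def)
  show "w \<in> mimg L q" if "w \<in> {w \<in> carrier_vec (mdim M). f *\<^sub>v w \<in> mimg L p}"
  proof -
    have w: "w \<in> carrier_vec (mdim M)" and "f *\<^sub>v w \<in> mimg L p" using that by auto
    then obtain v where v: "v \<in> carrier_vec (mdim L)" and "f *\<^sub>v w = p *\<^sub>v v"
      unfolding mimg_def by blast
    then have "f *\<^sub>v w = f *\<^sub>v (q *\<^sub>v v)" using pv by simp
    then have "w = q *\<^sub>v v" by (rule mono_hom_inj[OF f w, rotated]) (use q v in simp)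
    then show ?thesis using v by (simp add: mimg_def)
  qed
qed

lemma mono_hom_if_mult_mono:
  assumes f: "f \<in> carrier_mat (mdim N) (mdim M)" and q: "mhom m L M q"
    and p: "mono_hom m L N (f * q)"
  shows "mono_hom m L M q"
proof -
  have qc: "q \<in> carrier_mat (mdim M) (mdim L)" using q by (rule mhom_carrier)
  have "v = 0\<^sub>v (mdim L)" if v: "v \<in> carrier_vec (mdim L)" and "q *\<^sub>v v = 0\<^sub>v (mdim M)" for v
  proof -
    have "(f * q) *\<^sub>v v = 0\<^sub>v (mdim N)" using that f qc by (auto simp: mult_mat_vec_zero)
    then show ?thesis by (rule mono_hom_eq_zero[OF p v])
  qed
  then show ?thesis using q qc by (auto simp: mono_hom_def mker_def mult_mat_vec_zero)
qed

lemma mono_hom_dim_less: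
  assumes f: "mono_hom m M N f" and not_onto: "mimg M f \<noteq> carrier_vec (mdim N)"
  shows "mdim M < mdim N"
proof -
  have fc: "f \<in> carrier_mat (mdim N) (mdim M)" using f by (rule mono_hom_carrier)
  have inj: "\<And>v. v \<in> carrier_vec (mdim M) \<Longrightarrow> f *\<^sub>v v = 0\<^sub>v (mdim N) \<Longrightarrow> v = 0\<^sub>v (mdim M)"
    using mono_hom_eq_zero[OF f] by blast
  have "\<not> mdim N < mdim M"
  proof
    assume "mdim N < mdim M"
    then obtain v where "v \<in> carrier_vec (mdim M)" "v \<noteq> 0\<^sub>v (mdim M)" "f *\<^sub>v v = 0\<^sub>v (mdim N)"
      using wide_mat_kernel_nonzero[OF fc] by blast
    with inj show False by blast
  qed
  moreover have "mdim N \<noteq> mdim M"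
  proof
    assume eq: "mdim N = mdim M"
    have "(\<lambda>v. f *\<^sub>v v) ` carrier_vec (mdim M) = carrier_vec (mdim M)"
      by (rule square_mat_surj_if_inj[OF _ inj]) (use fc eq in simp_all)
    then have "mimg M f = carrier_vec (mdim N)" unfolding mimg_def eq .
    with not_onto show False ..
  qed
  ultimately show ?thesis by linarith
qed

lemma submod_carrier: "submod m M U \<Longrightarrow> U \<subseteq> carrier_vec (mdim M)"
  by (simp add: submod_def)

lemma submod_zero: "submod m M U \<Longrightarrow> 0\<^sub>v (mdim M) \<in> U"
  by (simp add: submod_def)

lemma submod_full: "is_rmod m c u M \<Longrightarrow> submod m M (carrier_vec (mdim M))"
  unfolding submod_def using is_rmod_act by fastforce

lemma submod_image:
  assumes M: "is_rmod m c u M" and N: "is_rmod m c u N" and f: "mhom m M N f" and U: "submod m M U"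
  shows "submod m N ((\<lambda>v. f *\<^sub>v v) ` U)"
proof -
  have fc: "f \<in> carrier_mat (mdim N) (mdim M)" using f by (rule mhom_carrier)
  have Uc: "U \<subseteq> carrier_vec (mdim M)" using U by (rule submod_carrier)
  have "f *\<^sub>v 0\<^sub>v (mdim M) = 0\<^sub>v (mdim N)" using fc by (rule mult_mat_vec_zero)
  then have zero: "0\<^sub>v (mdim N) \<in> (\<lambda>v. f *\<^sub>v v) ` U" using submod_zero[OF U] by (metis image_eqI)
  have add: "f *\<^sub>v a + f *\<^sub>v b = f *\<^sub>v (a + b)" and smult: "x \<cdot>\<^sub>v (f *\<^sub>v a) = f *\<^sub>v (x \<cdot>\<^sub>v a)"
    if "a \<in> U" "b \<in> U" for a b x
    using that Uc fc by (auto simp: mult_add_distrib_mat_vec mult_mat_vec subset_iff)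
  have act: "act N i *\<^sub>v (f *\<^sub>v a) = f *\<^sub>v (act M i *\<^sub>v a)" if i: "i < m" and "a \<in> U" for i a
  proof -
    have a: "a \<in> carrier_vec (mdim M)" using that Uc by blast
    note acts = is_rmod_act[OF M i] is_rmod_act[OF N i]
    have "act N i *\<^sub>v (f *\<^sub>v a) = (act N i * f) *\<^sub>v a" using acts fc a by simp
    also have "\<dots> = (f * act M i) *\<^sub>v a" using f i by (simp add: mhom_def)
    also have "\<dots> = f *\<^sub>v (act M i *\<^sub>v a)" using acts fc a by simp
    finally show ?thesis .
  qed
  show ?thesis
    unfolding submod_def
  proof (intro conjI ballI allI impI zero)
    show "(\<lambda>v. f *\<^sub>v v) ` U \<subseteq> carrier_vec (mdim N)" using Uc fc by auto
  next
    fix x y assume "x \<in> (\<lambda>v. f *\<^sub>v v) ` U" "y \<in> (\<lambda>v. f *\<^sub>v v) ` U"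
    then show "x + y \<in> (\<lambda>v. f *\<^sub>v v) ` U" using add U by (auto simp: submod_def)
  next
    fix a x assume "x \<in> (\<lambda>v. f *\<^sub>v v) ` U"
    then show "a \<cdot>\<^sub>v x \<in> (\<lambda>v. f *\<^sub>v v) ` U" using smult U by (auto simp: submod_def)
  next
    fix i x assume "i < m" "x \<in> (\<lambda>v. f *\<^sub>v v) ` U"
    then show "act N i *\<^sub>v x \<in> (\<lambda>v. f *\<^sub>v v) ` U" using act U by (auto simp: submod_def)
  qed
qed

lemma submod_preimage:
  assumes M: "is_rmod m c u M" and N: "is_rmod m c u N" and f: "mhom m M N f" and U: "submod m N U"
  shows "submod m M {v \<in> carrier_vec (mdim M). f *\<^sub>v v \<in> U}"
proof -
  have fc: "f \<in> carrier_mat (mdim N) (mdim M)" using f by (rule mhom_carrier)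
  have "f *\<^sub>v 0\<^sub>v (mdim M) = 0\<^sub>v (mdim N)" using fc by (rule mult_mat_vec_zero)
  then have zero: "f *\<^sub>v 0\<^sub>v (mdim M) \<in> U" using submod_zero[OF U] by simp
  have add: "f *\<^sub>v (a + b) = f *\<^sub>v a + f *\<^sub>v b" and smult: "f *\<^sub>v (x \<cdot>\<^sub>v a) = x \<cdot>\<^sub>v (f *\<^sub>v a)"
    if "a \<in> carrier_vec (mdim M)" "b \<in> carrier_vec (mdim M)" for a b x
    using that fc by (auto simp: mult_add_distrib_mat_vec mult_mat_vec)
  have act: "f *\<^sub>v (act M i *\<^sub>v a) = act N i *\<^sub>v (f *\<^sub>v a)" and act_carrier: "act M i *\<^sub>v a \<in> carrier_vec (mdim M)"
    if i: "i < m" and a: "a \<in> carrier_vec (mdim M)" for i a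
  proof -
    note acts = is_rmod_act[OF M i] is_rmod_act[OF N i]
    have "f *\<^sub>v (act M i *\<^sub>v a) = (f * act M i) *\<^sub>v a" using acts fc a by simp
    also have "\<dots> = (act N i * f) *\<^sub>v a" using f i by (simp add: mhom_def)
    also have "\<dots> = act N i *\<^sub>v (f *\<^sub>v a)" using acts fc a by simp
    finally show "f *\<^sub>v (act M i *\<^sub>v a) = act N i *\<^sub>v (f *\<^sub>v a)" .
    show "act M i *\<^sub>v a \<in> carrier_vec (mdim M)" using acts a by simp
  qed
  show ?thesis
    using zero add smult act act_carrier U unfolding submod_def by auto
qed

definition zmod :: "'k::field rmod" where
  "zmod = (0, \<lambda>i. 0\<^sub>m 0 0)"

lemma mdim_zmod [simp]: "mdim zmod = 0"
  by (simp add: zmod_def mdim_def)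

lemma is_rmod_zmod: "is_rmod m c u zmod"
  by (simp add: is_rmod_def zmod_def mdim_def act_def)

lemma is_sub_iso_full_self:
  assumes M: "is_rmod m c u M"
  shows "is_sub_iso m c u M (carrier_vec (mdim M)) M"
  unfolding is_sub_iso_def using M mono_hom_one[OF M] mimg_one by blast

lemma is_quot_iso_zero_self:
  assumes M: "is_rmod m c u M"
  shows "is_quot_iso m c u M {0\<^sub>v (mdim M)} M"
  unfolding is_quot_iso_def epi_hom_def using M mhom_one[OF M] mker_one mimg_one by blast

lemma is_sub_iso_zero_zmod:
  fixes M :: "'k::field rmod"
  assumes M: "is_rmod m c u M"
  shows "is_sub_iso m c u M {0\<^sub>v (mdim M)} zmod"
proof -
  let ?z = "0\<^sub>m (mdim M) 0 :: 'k mat"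
  have "mhom m zmod M ?z" by (rule mhom_if_dim_zero[OF is_rmod_zmod M]) simp_all
  moreover have "mker zmod M ?z = {0\<^sub>v (mdim zmod)}" by (auto simp: mker_def)
  ultimately have "mono_hom m zmod M ?z" by (simp add: mono_hom_def)
  moreover have "mimg zmod ?z = {0\<^sub>v (mdim M)}" by (auto simp: mimg_def carrier_vec_0)
  ultimately show ?thesis unfolding is_sub_iso_def using is_rmod_zmod by blast
qed

lemma is_quot_iso_full_zmod:
  fixes M :: "'k::field rmod"
  assumes M: "is_rmod m c u M"
  shows "is_quot_iso m c u M (carrier_vec (mdim M)) zmod"
proof -
  let ?g = "0\<^sub>m 0 (mdim M) :: 'k mat"
  have g0: "?g *\<^sub>v v = 0\<^sub>v 0" for v by (intro eq_vecI) auto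
  have "mhom m M zmod ?g" by (rule mhom_if_dim_zero[OF M is_rmod_zmod]) simp_all
  moreover have "mimg M ?g = carrier_vec (mdim zmod)"
    unfolding mimg_def g0 carrier_vec_0 mdim_zmod by (rule image_constant[OF zero_carrier_vec])
  ultimately have "epi_hom m M zmod ?g" by (simp add: epi_hom_def)
  moreover have "mker M zmod ?g = carrier_vec (mdim M)" by (auto simp: mker_def g0)
  ultimately show ?thesis unfolding is_quot_iso_def using is_rmod_zmod by blast
qed

lemma is_quot_iso_full_dim:
  fixes N :: "'k::field rmod"
  assumes "is_quot_iso m c u M (carrier_vec (mdim M)) N"
  shows "mdim N = 0"
proof (rule ccontr)
  assume "mdim N \<noteq> 0"
  obtain g where g: "epi_hom m M N g" "mker M N g = carrier_vec (mdim M)"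
    using assms by (auto simp: is_quot_iso_def)
  have "(unit_vec (mdim N) 0 :: 'k vec) \<in> mimg M g" using g(1) by (simp add: epi_hom_def)
  then obtain v where "v \<in> mker M N g" "unit_vec (mdim N) 0 = g *\<^sub>v v"
    unfolding mimg_def g(2) by blast
  then have "(unit_vec (mdim N) 0 :: 'k vec) = 0\<^sub>v (mdim N)" by (simp add: mker_def)
  with unit_vec_nonzero[of 0 "mdim N"] \<open>mdim N \<noteq> 0\<close> show False by simp
qed

lemma VLam_ses: "\<theta> \<in> VLam m c u \<Longrightarrow> ses m c u L M N f g \<Longrightarrow> \<theta> M = \<theta> L + \<theta> N"
  unfolding VLam_def by blast

lemma VLam_sub_quot:
  assumes \<theta>: "\<theta> \<in> VLam m c u" and M: "is_rmod m c u M"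
    and sub: "is_sub_iso m c u M A L" and quot: "is_quot_iso m c u M A N"
  shows "\<theta> M = \<theta> L + \<theta> N"
proof -
  obtain f where "mono_hom m L M f" "mimg L f = A" using sub by (auto simp: is_sub_iso_def)
  moreover obtain g where "epi_hom m M N g" "mker M N g = A" using quot by (auto simp: is_quot_iso_def)
  moreover have "is_rmod m c u L" "is_rmod m c u N"
    using sub quot by (simp_all add: is_sub_iso_def is_quot_iso_def)
  ultimately have "ses m c u L M N f g"
    unfolding ses_def using M by simp
  then show ?thesis by (rule VLam_ses[OF \<theta>])
qed

lemma VLam_dim_zero:
  assumes \<theta>: "\<theta> \<in> VLam m c u" and N: "is_rmod m c u N" and dim: "mdim N = 0"
  shows "\<theta> N = 0"
proof -
  have "is_sub_iso m c u N (carrier_vec (mdim N)) N" using N by (rule is_sub_iso_full_self)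
  moreover have "is_quot_iso m c u N (carrier_vec (mdim N)) N"
    using is_quot_iso_zero_self[OF N] dim by (simp add: carrier_vec_0)
  ultimately have "\<theta> N = \<theta> N + \<theta> N" by (rule VLam_sub_quot[OF \<theta> N])
  then show ?thesis by simp
qed

lemma VLam_full_sub:
  assumes \<theta>: "\<theta> \<in> VLam m c u" and M: "is_rmod m c u M"
    and sub: "is_sub_iso m c u M (carrier_vec (mdim M)) N"
  shows "\<theta> N = \<theta> M"
  using VLam_sub_quot[OF \<theta> M sub is_quot_iso_full_zmod[OF M]] VLam_dim_zero[OF \<theta> is_rmod_zmod]
  by simp

lemma VLam_segment:
  assumes "\<theta>0 \<in> VLam m c u" "\<theta>1 \<in> VLam m c u"
  shows "(\<lambda>M. (1 - t) * \<theta>0 M + t * \<theta>1 M) \<in> VLam m c u"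
  unfolding VLam_def mem_Collect_eq
proof (intro allI impI)
  fix L M N f g assume ses: "ses m c u L M N f g"
  have "\<theta>0 M = \<theta>0 L + \<theta>0 N" "\<theta>1 M = \<theta>1 L + \<theta>1 N"
    using VLam_ses[OF assms(1) ses] VLam_ses[OF assms(2) ses] .
  then show "(1 - t) * \<theta>0 M + t * \<theta>1 M = (1 - t) * \<theta>0 L + t * \<theta>1 L + ((1 - t) * \<theta>0 N + t * \<theta>1 N)"
    by (simp add: algebra_simps)
qed

section \<open>Subobjects in a torsion class\<close>

lemma torsion_class_rmod: "torsion_class m c u G \<Longrightarrow> M \<in> G \<Longrightarrow> is_rmod m c u M"
  by (simp add: torsion_class_def)

lemma torsion_class_epi:
  "torsion_class m c u G \<Longrightarrow> M \<in> G \<Longrightarrow> is_rmod m c u N \<Longrightarrow> epi_hom m M N g \<Longrightarrow> N \<in> G"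
  unfolding torsion_class_def by blast

lemma zmod_in_torsion_class:
  assumes tc: "torsion_class m c u G" and M: "M \<in> G"
  shows "zmod \<in> G"
proof -
  obtain g where "epi_hom m M zmod g"
    using is_quot_iso_full_zmod[OF torsion_class_rmod[OF tc M]] by (auto simp: is_quot_iso_def)
  then show ?thesis by (rule torsion_class_epi[OF tc M is_rmod_zmod])
qed

lemma sub_iso_in_torsion_class:
  assumes tc: "torsion_class m c u G" and M: "is_rmod m c u M"
    and sub_in: "sub_in m c u G M A" and sub: "is_sub_iso m c u M A N"
  shows "N \<in> G"
proof -
  obtain N' where N'G: "N' \<in> G" and sub': "is_sub_iso m c u M A N'"
    using sub_in by (auto simp: sub_in_def)
  have N': "is_rmod m c u N'" and N: "is_rmod m c u N"
    using sub sub' by (simp_all add: is_sub_iso_def)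
  obtain f where f: "mono_hom m N M f" "mimg N f = A" using sub by (auto simp: is_sub_iso_def)
  obtain p where p: "mono_hom m N' M p" "mimg N' p = A" using sub' by (auto simp: is_sub_iso_def)
  obtain q where q: "mhom m N' N q" and fq: "f * q = p"
    using mhom_factor_through_mono[OF N' N M f(1)] p f by (auto simp: mono_hom_def)
  have "mimg N' q = {w \<in> carrier_vec (mdim N). f *\<^sub>v w \<in> mimg N f}"
    using mimg_factor_through_mono[OF f(1) mhom_carrier[OF q] fq] f(2) p(2) by simp
  also have "\<dots> = carrier_vec (mdim N)" by (auto simp: mimg_def)
  finally have "epi_hom m N' N q" using q by (simp add: epi_hom_def)
  then show ?thesis by (rule torsion_class_epi[OF tc N'G N])
qed

lemma is_sub_iso_image:
  assumes N: "is_rmod m c u N" and M: "is_rmod m c u M"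
    and f: "mono_hom m N M f" and sub: "is_sub_iso m c u N U L"
  shows "is_sub_iso m c u M ((\<lambda>v. f *\<^sub>v v) ` U) L"
proof -
  have L: "is_rmod m c u L" using sub by (simp add: is_sub_iso_def)
  obtain r where r: "mono_hom m L N r" "mimg L r = U" using sub by (auto simp: is_sub_iso_def)
  have "mono_hom m L M (f * r)" by (rule mono_hom_mult[OF L N M f r(1)])
  moreover have "mimg L (f * r) = (\<lambda>v. f *\<^sub>v v) ` U"
    using mimg_mult[OF mono_hom_carrier[OF f] mono_hom_carrier[OF r(1)]] r(2) by simp
  ultimately show ?thesis unfolding is_sub_iso_def using L by blast
qed

lemma sub_in_image:
  assumes "is_rmod m c u N" "is_rmod m c u M" "mono_hom m N M f" "sub_in m c u G N U"
  shows "sub_in m c u G M ((\<lambda>v. f *\<^sub>v v) ` U)"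
  using assms is_sub_iso_image unfolding sub_in_def by blast

lemma sub_in_preimage:
  assumes N: "is_rmod m c u N" and M: "is_rmod m c u M"
    and f: "mono_hom m N M f" "mimg N f = A" and sub_in: "sub_in m c u G M (A \<inter> B)"
  shows "sub_in m c u G N {v \<in> carrier_vec (mdim N). f *\<^sub>v v \<in> B}"
proof -
  obtain P where PG: "P \<in> G" and sub: "is_sub_iso m c u M (A \<inter> B) P"
    using sub_in by (auto simp: sub_in_def)
  have P: "is_rmod m c u P" using sub by (simp add: is_sub_iso_def)
  obtain p where p: "mono_hom m P M p" "mimg P p = A \<inter> B" using sub by (auto simp: is_sub_iso_def)
  obtain q where q: "mhom m P N q" and fq: "f * q = p"
    using mhom_factor_through_mono[OF P N M f(1)] p f(2) by (auto simp: mono_hom_def)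
  have "mono_hom m P N q" using mono_hom_if_mult_mono[OF mono_hom_carrier[OF f(1)] q] fq p(1) by simp
  moreover have "mimg P q = {w \<in> carrier_vec (mdim N). f *\<^sub>v w \<in> A \<inter> B}"
    using mimg_factor_through_mono[OF f(1) mhom_carrier[OF q] fq] p(2) by simp
  moreover have "{w \<in> carrier_vec (mdim N). f *\<^sub>v w \<in> A \<inter> B} = {v \<in> carrier_vec (mdim N). f *\<^sub>v v \<in> B}"
    using f(2) by (auto simp: mimg_def)
  ultimately show ?thesis unfolding sub_in_def is_sub_iso_def using PG P by auto
qed

lemma strict_subobj_image:
  assumes N: "is_rmod m c u N" and M: "is_rmod m c u M"
    and f: "mono_hom m N M f" "mimg N f = A"
    and A: "strict_subobj m c u G M A" and U: "strict_subobj m c u G N U"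
  shows "strict_subobj m c u G M ((\<lambda>v. f *\<^sub>v v) ` U)"
  unfolding strict_subobj_def subobj_def
proof (intro conjI allI impI)
  have fh: "mhom m N M f" using f(1) by (simp add: mono_hom_def)
  have Uc: "U \<subseteq> carrier_vec (mdim N)" using U by (simp add: strict_subobj_def subobj_def submod_def)
  show "submod m M ((\<lambda>v. f *\<^sub>v v) ` U)"
    using submod_image[OF N M fh] U by (simp add: strict_subobj_def subobj_def)
  show "sub_in m c u G M ((\<lambda>v. f *\<^sub>v v) ` U)"
    using sub_in_image[OF N M f(1)] U by (simp add: strict_subobj_def subobj_def)
  fix B assume B: "submod m M B \<and> sub_in m c u G M B"
  define B' where "B' = {v \<in> carrier_vec (mdim N). f *\<^sub>v v \<in> B}"
  have "sub_in m c u G M (A \<inter> B)" using A B by (simp add: strict_subobj_def subobj_def)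
  then have "sub_in m c u G N B'" unfolding B'_def by (rule sub_in_preimage[OF N M f])
  moreover have "submod m N B'" unfolding B'_def using submod_preimage[OF N M fh] B by blast
  ultimately have "sub_in m c u G N (U \<inter> B')" using U by (simp add: strict_subobj_def subobj_def)
  then have "sub_in m c u G M ((\<lambda>v. f *\<^sub>v v) ` (U \<inter> B'))" by (rule sub_in_image[OF N M f(1)])
  moreover have "(\<lambda>v. f *\<^sub>v v) ` (U \<inter> B') = (\<lambda>v. f *\<^sub>v v) ` U \<inter> B"
    using Uc unfolding B'_def by blast
  ultimately show "sub_in m c u G M ((\<lambda>v. f *\<^sub>v v) ` U \<inter> B)" by simp
qed

lemma strict_subobj_zero:
  assumes tc: "torsion_class m c u G" and M: "M \<in> G"
  shows "strict_subobj m c u G M {0\<^sub>v (mdim M)}"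
proof -
  have Mr: "is_rmod m c u M" using tc M by (rule torsion_class_rmod)
  have sub_in: "sub_in m c u G M {0\<^sub>v (mdim M)}"
    unfolding sub_in_def using is_sub_iso_zero_zmod[OF Mr] zmod_in_torsion_class[OF tc M] by blast
  moreover have "submod m M {0\<^sub>v (mdim M)}"
    unfolding submod_def using is_rmod_act[OF Mr] by (auto simp: mult_mat_vec_zero)
  moreover have "{0\<^sub>v (mdim M)} \<inter> B = {0\<^sub>v (mdim M)}" if "submod m M B" for B
    using submod_zero[OF that] by blast
  ultimately show ?thesis by (simp add: strict_subobj_def subobj_def)
qed

lemma strict_subobj_full:
  assumes tc: "torsion_class m c u G" and M: "M \<in> G"
  shows "strict_subobj m c u G M (carrier_vec (mdim M))"
proof -
  have Mr: "is_rmod m c u M" using tc M by (rule torsion_class_rmod)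
  have "sub_in m c u G M (carrier_vec (mdim M))"
    unfolding sub_in_def using is_sub_iso_full_self[OF Mr] M by blast
  moreover have "carrier_vec (mdim M) \<inter> B = B" if "submod m M B" for B
    using submod_carrier[OF that] by blast
  ultimately show ?thesis using submod_full[OF Mr] by (simp add: strict_subobj_def subobj_def)
qed

definition nonzero_strict_sub :: "nat \<Rightarrow> (nat \<Rightarrow> nat \<Rightarrow> nat \<Rightarrow> 'k::field) \<Rightarrow> (nat \<Rightarrow> 'k) \<Rightarrow>
    'k rmod set \<Rightarrow> 'k rmod \<Rightarrow> 'k rmod \<Rightarrow> bool" where
  "nonzero_strict_sub m c u G M N \<longleftrightarrow>
     mdim N \<noteq> 0 \<and> (\<exists>A. strict_subobj m c u G M A \<and> is_sub_iso m c u M A N)"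

lemma nonzero_strict_sub_refl:
  assumes "torsion_class m c u G" "M \<in> G" "mdim M \<noteq> 0"
  shows "nonzero_strict_sub m c u G M M"
  using assms strict_subobj_full is_sub_iso_full_self torsion_class_rmod
  unfolding nonzero_strict_sub_def by blast

lemma nonzero_strict_sub_trans:
  assumes M: "is_rmod m c u M"
    and MN: "nonzero_strict_sub m c u G M N" and NL: "nonzero_strict_sub m c u G N L"
  shows "nonzero_strict_sub m c u G M L"
proof -
  obtain A where A: "strict_subobj m c u G M A" and sub: "is_sub_iso m c u M A N"
    using MN by (auto simp: nonzero_strict_sub_def)
  obtain U where U: "strict_subobj m c u G N U" and subU: "is_sub_iso m c u N U L"
    and L: "mdim L \<noteq> 0" using NL by (auto simp: nonzero_strict_sub_def)
  have N: "is_rmod m c u N" using sub by (simp add: is_sub_iso_def)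
  obtain f where f: "mono_hom m N M f" "mimg N f = A" using sub by (auto simp: is_sub_iso_def)
  have "strict_subobj m c u G M ((\<lambda>v. f *\<^sub>v v) ` U)" by (rule strict_subobj_image[OF N M f A U])
  moreover have "is_sub_iso m c u M ((\<lambda>v. f *\<^sub>v v) ` U) L" by (rule is_sub_iso_image[OF N M f(1) subU])
  ultimately show ?thesis using L unfolding nonzero_strict_sub_def by blast
qed

section \<open>The sign of theta on strict subobjects\<close>

lemma Pcl_pos:
  assumes tc: "torsion_class m c u G" and P: "M \<in> Pcl m c u G \<theta>" and M: "mdim M \<noteq> 0"
  shows "0 < \<theta> M"
proof -
  have MG: "M \<in> G" using P by (simp add: Pcl_def)
  have "strict_subobj m c u G M {0\<^sub>v (mdim M)}" by (rule strict_subobj_zero[OF tc MG])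
  moreover have "is_quot_iso m c u M {0\<^sub>v (mdim M)} M"
    by (rule is_quot_iso_zero_self[OF torsion_class_rmod[OF tc MG]])
  ultimately show ?thesis using P M unfolding Pcl_def by blast
qed

lemma pwall_if_proper_strict_subs_neg:
  assumes \<theta>: "\<theta> \<in> VLam m c u" and M: "is_rmod m c u M" and zero: "\<theta> M = 0"
    and neg: "\<And>A N. strict_subobj m c u G M A \<Longrightarrow> is_sub_iso m c u M A N \<Longrightarrow>
      A \<noteq> carrier_vec (mdim M) \<Longrightarrow> mdim N \<noteq> 0 \<Longrightarrow> \<theta> N < 0"
  shows "\<theta> \<in> pwall m c u G M"
  unfolding pwall_def
proof (intro CollectI conjI allI impI \<theta> zero)
  fix A N assume "strict_subobj m c u G M A \<and> is_sub_iso m c u M A N"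
  then have A: "strict_subobj m c u G M A" and sub: "is_sub_iso m c u M A N" by auto
  have N: "is_rmod m c u N" using sub by (simp add: is_sub_iso_def)
  consider "mdim N = 0" | "A = carrier_vec (mdim M)" | "mdim N \<noteq> 0" "A \<noteq> carrier_vec (mdim M)"
    by blast
  then show "\<theta> N \<le> 0"
  proof cases
    case 1
    then show ?thesis using VLam_dim_zero[OF \<theta> N] by simp
  next
    case 2
    then show ?thesis using VLam_full_sub[OF \<theta> M] sub zero by simp
  next
    case 3
    then show ?thesis using neg[OF A sub] by simp
  qed
qed

lemma Pcl_if_proper_strict_subs_neg:
  assumes tc: "torsion_class m c u G" and \<theta>: "\<theta> \<in> VLam m c u" and MG: "M \<in> G"
    and pos: "0 < \<theta> M"
    and neg: "\<And>A N. strict_subobj m c u G M A \<Longrightarrow> is_sub_iso m c u M A N \<Longrightarrow>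
      A \<noteq> carrier_vec (mdim M) \<Longrightarrow> mdim N \<noteq> 0 \<Longrightarrow> \<theta> N < 0"
  shows "M \<in> Pcl m c u G \<theta>"
  unfolding Pcl_def
proof (intro CollectI conjI disjI2 allI impI MG)
  have M: "is_rmod m c u M" using tc MG by (rule torsion_class_rmod)
  fix A N assume "strict_subobj m c u G M A \<and> is_quot_iso m c u M A N \<and> mdim N \<noteq> 0"
  then have A: "strict_subobj m c u G M A" and quot: "is_quot_iso m c u M A N" and N: "mdim N \<noteq> 0"
    by auto
  obtain L where sub: "is_sub_iso m c u M A L"
    using A by (auto simp: strict_subobj_def subobj_def sub_in_def)
  have L: "is_rmod m c u L" using sub by (simp add: is_sub_iso_def)
  have proper: "A \<noteq> carrier_vec (mdim M)" using quot N by (auto dest: is_quot_iso_full_dim)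
  \<comment> \<open>L is zero, or a proper strict subobject since the quotient N is nonzero\<close>
  have "\<theta> L \<le> 0"
    using VLam_dim_zero[OF \<theta> L] neg[OF A sub proper] by fastforce
  moreover have "\<theta> M = \<theta> L + \<theta> N" by (rule VLam_sub_quot[OF \<theta> M sub quot])
  ultimately show "0 < \<theta> N" using pos by linarith
qed

lemma neg_if_no_nonzero_strict_sub_in_Pcl:
  assumes tc: "torsion_class m c u G" and \<theta>: "\<theta> \<in> VLam m c u" and off_walls: "\<theta> \<notin> WG m c u G"
  shows "M \<in> G \<Longrightarrow> mdim M \<noteq> 0 \<Longrightarrow> (\<And>N. nonzero_strict_sub m c u G M N \<Longrightarrow> N \<notin> Pcl m c u G \<theta>)
    \<Longrightarrow> \<theta> M < 0"
proof (induction "mdim M" arbitrary: M rule: less_induct)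
  case (less M)
  have Mr: "is_rmod m c u M" using tc less.prems(1) by (rule torsion_class_rmod)
  have neg: "\<theta> N < 0"
    if A: "strict_subobj m c u G M A" and sub: "is_sub_iso m c u M A N"
      and proper: "A \<noteq> carrier_vec (mdim M)" and N: "mdim N \<noteq> 0" for A N
  proof -
    have MN: "nonzero_strict_sub m c u G M N"
      using A sub N unfolding nonzero_strict_sub_def by blast
    have NG: "N \<in> G"
      using sub_iso_in_torsion_class[OF tc Mr _ sub] A by (simp add: strict_subobj_def subobj_def)
    obtain f where "mono_hom m N M f" "mimg N f = A" using sub by (auto simp: is_sub_iso_def)
    then have "mdim N < mdim M" using proper by (intro mono_hom_dim_less) auto
    moreover have "L \<notin> Pcl m c u G \<theta>" if "nonzero_strict_sub m c u G N L" for L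
      using less.prems(3) nonzero_strict_sub_trans[OF Mr MN that] by blast
    ultimately show ?thesis using less.hyps NG N by blast
  qed
  have "\<theta> M \<noteq> 0"
  proof
    assume "\<theta> M = 0"
    then have "\<theta> \<in> pwall m c u G M" using pwall_if_proper_strict_subs_neg[OF \<theta> Mr] neg by blast
    then show False using off_walls less.prems(1,2) unfolding WG_def by blast
  qed
  moreover have "\<not> 0 < \<theta> M"
  proof
    assume "0 < \<theta> M"
    then have "M \<in> Pcl m c u G \<theta>"
      using Pcl_if_proper_strict_subs_neg[OF tc \<theta> less.prems(1)] neg by blast
    then show False using less.prems nonzero_strict_sub_refl[OF tc] by blast
  qed
  ultimately show ?case by linarith
qed

section \<open>Segments avoiding the walls\<close>

lemma segment_notin_WG:
  assumes tc: "torsion_class m c u G"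
    and \<theta>0: "\<theta>0 \<in> VLam m c u - WG m c u G" and \<theta>1: "\<theta>1 \<in> VLam m c u - WG m c u G"
    and same: "Pcl m c u G \<theta>0 = Pcl m c u G \<theta>1" and t: "0 \<le> t" "t \<le> 1"
  shows "(\<lambda>M. (1 - t) * \<theta>0 M + t * \<theta>1 M) \<notin> WG m c u G"
proof
  let ?\<theta> = "\<lambda>M. (1 - t) * \<theta>0 M + t * \<theta>1 M"
  assume "?\<theta> \<in> WG m c u G"
  then obtain M where MG: "M \<in> G" and M: "mdim M \<noteq> 0" and wall: "?\<theta> \<in> pwall m c u G M"
    unfolding WG_def by blast
  show False
  proof (cases "\<exists>N. nonzero_strict_sub m c u G M N \<and> N \<in> Pcl m c u G \<theta>0")
    case True
    then obtain N A where N: "mdim N \<noteq> 0" "N \<in> Pcl m c u G \<theta>0"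
      and sub: "strict_subobj m c u G M A" "is_sub_iso m c u M A N"
      unfolding nonzero_strict_sub_def by blast
    have "0 < \<theta>0 N" "0 < \<theta>1 N" using Pcl_pos[OF tc] N same by auto
    then have "(1 - t) * - \<theta>0 N + t * - \<theta>1 N < 0" using t by (intro convex_bound_lt) auto
    moreover have "?\<theta> N \<le> 0" using wall sub unfolding pwall_def by blast
    ultimately show False by simp
  next
    case False
    then have "\<theta>0 M < 0" "\<theta>1 M < 0"
      using neg_if_no_nonzero_strict_sub_in_Pcl[OF tc _ _ MG M] \<theta>0 \<theta>1 same by auto
    then have "?\<theta> M < 0" using t by (intro convex_bound_lt) auto
    moreover have "?\<theta> M = 0" using wall by (simp add: pwall_def)
    ultimately show False by simp
  qed
qed

lemma joinable_in_segment:
  assumes "\<And>t. t \<in> {0..1} \<Longrightarrow> (\<lambda>M. (1 - t) * \<theta>0 M + t * \<theta>1 M) \<in> S"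
  shows "joinable_in m c u S \<theta>0 \<theta>1"
proof -
  let ?\<gamma> = "\<lambda>t M. (1 - t) * \<theta>0 M + t * \<theta>1 M"
  have "continuous_on {0..1} (\<lambda>t. ?\<gamma> t M)" for M by (intro continuous_intros)
  then show ?thesis unfolding joinable_in_def using assms by (intro exI[of _ ?\<gamma>]) auto
qed

theorem mainTheorem15:
  fixes m :: nat and c :: "nat \<Rightarrow> nat \<Rightarrow> nat \<Rightarrow> 'k::field" and u :: "nat \<Rightarrow> 'k"
    and G :: "'k rmod set" and \<theta>0 \<theta>1 :: "'k rmod \<Rightarrow> real"
  assumes "fd_algebra m c u"
    and "torsion_class m c u G"
    and "\<theta>0 \<in> VLam m c u - WG m c u G"
    and "\<theta>1 \<in> VLam m c u - WG m c u G"
    and "\<not> joinable_in m c u (VLam m c u - WG m c u G) \<theta>0 \<theta>1"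
  shows "Pcl m c u G \<theta>0 \<noteq> Pcl m c u G \<theta>1"
proof
  assume same: "Pcl m c u G \<theta>0 = Pcl m c u G \<theta>1"
  have "joinable_in m c u (VLam m c u - WG m c u G) \<theta>0 \<theta>1"
  proof (rule joinable_in_segment)
    fix t :: real assume "t \<in> {0..1}"
    then show "(\<lambda>M. (1 - t) * \<theta>0 M + t * \<theta>1 M) \<in> VLam m c u - WG m c u G"
      using VLam_segment segment_notin_WG[OF assms(2-4) same] assms(3,4) by auto
  qed
  with assms(5) show False by contradiction
qed

end
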